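(* Let $m>n$ be positive integers and let $G[V_1,V_2]$ be a balanced bipartite graph on $2(m+n-1)$ vertices (so $|V_1|=|V_2|=m+n-1$) with minimum degree $\delta(G)>\frac{3}{4}(m+n-1)$. Suppose a red-blue coloring of the edges of $G$ has no red connected $m$-matching. Then there is a connected component $C$ of the blue subgraph with $|V(C)\cap V_1|\ge n$ and $|V(C)\cap V_2|\ge n$.
   Context: For a red-blue edge coloring of $G$, the red subgraph (resp. blue subgraph) is the spanning subgraph of $G$ consisting of all red (resp. blue) edges; a red (blue) component is a connected component of it. A connected $k$-matching in a graph $H$ is a matching with $k$ edges all lying in a single connected component of $H$; a red connected $k$-matching is a connected $k$-matching in the red subgraph. *)

theory Defs
  imports Complex_Main
begin

definition balanced_bipartite_graph :: "'a set \<Rightarrow> 'a set \<Rightarrow> ('a \<Rightarrow> 'a \<Rightarrow> bool) \<Rightarrow> bool" where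
  "balanced_bipartite_graph V1 V2 E \<longleftrightarrow>
     finite V1 \<and> finite V2 \<and> V1 \<inter> V2 = {} \<and> card V1 = card V2 \<and>
     (\<forall>u v. E u v \<longrightarrow> E v u) \<and>
     (\<forall>u v. E u v \<longrightarrow> (u \<in> V1 \<and> v \<in> V2) \<or> (u \<in> V2 \<and> v \<in> V1))"

definition degree :: "'a set \<Rightarrow> ('a \<Rightarrow> 'a \<Rightarrow> bool) \<Rightarrow> 'a \<Rightarrow> nat" where
  "degree V E u = card {v \<in> V. E u v}"

text \<open>A red-blue colouring: the red edges R form a symmetric subrelation of E;
  the remaining edges of E are blue.\<close>
definition red_blue_coloring :: "('a \<Rightarrow> 'a \<Rightarrow> bool) \<Rightarrow> ('a \<Rightarrow> 'a \<Rightarrow> bool) \<Rightarrow> bool" where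
  "red_blue_coloring E R \<longleftrightarrow> (\<forall>u v. R u v \<longrightarrow> E u v) \<and> (\<forall>u v. R u v \<longrightarrow> R v u)"

definition blue_edges :: "('a \<Rightarrow> 'a \<Rightarrow> bool) \<Rightarrow> ('a \<Rightarrow> 'a \<Rightarrow> bool) \<Rightarrow> 'a \<Rightarrow> 'a \<Rightarrow> bool" where
  "blue_edges E R u v \<longleftrightarrow> E u v \<and> \<not> R u v"

definition is_component :: "'a set \<Rightarrow> ('a \<Rightarrow> 'a \<Rightarrow> bool) \<Rightarrow> 'a set \<Rightarrow> bool" where
  "is_component V H C \<longleftrightarrow> (\<exists>x\<in>V. C = {y \<in> V. (\<lambda>a b. a \<in> V \<and> b \<in> V \<and> H a b)\<^sup>*\<^sup>* x y})"

definition is_matching :: "('a \<Rightarrow> 'a \<Rightarrow> bool) \<Rightarrow> 'a set set \<Rightarrow> bool" where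
  "is_matching H M \<longleftrightarrow> (\<forall>e\<in>M. \<exists>u v. e = {u, v} \<and> u \<noteq> v \<and> H u v) \<and>
     (\<forall>e\<in>M. \<forall>f\<in>M. e \<noteq> f \<longrightarrow> e \<inter> f = {})"

definition connected_k_matching :: "'a set \<Rightarrow> ('a \<Rightarrow> 'a \<Rightarrow> bool) \<Rightarrow> nat \<Rightarrow> 'a set set \<Rightarrow> bool" where
  "connected_k_matching V H k M \<longleftrightarrow> is_matching H M \<and> finite M \<and> card M = k \<and>
     (\<exists>C. is_component V H C \<and> (\<forall>e\<in>M. e \<subseteq> C))"

end

theory Submission
  imports Defs
begin

(* Every vertex misses fewer than a quarter of the opposite side, so two vertices of one side have
   more than half of the other side as common neighbours. Hence a blue component containing two
   vertices of V1 from different red components contains more than half of V2: each common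
   neighbour is joined in blue to one of them.
   If a red component K has at least n vertices on one side, then either K and its complement give
   large red-free sets on opposite sides, which the dense blue edges between them glue into one blue
   component, or K has at least m vertices on both sides. In that case a maximum red matching inside
   K has fewer than m edges, and its Koenig-type decomposition provides such red-free sets inside K.
   If all red components are small, some blue component meets two red components in V2, since
   otherwise the common neighbourhood of two suitable vertices of V1 would lie in a single small red
   component. *)

definition component_of :: "'a set \<Rightarrow> ('a \<Rightarrow> 'a \<Rightarrow> bool) \<Rightarrow> 'a \<Rightarrow> 'a set" where
  "component_of V H x = {y \<in> V. (\<lambda>a b. a \<in> V \<and> b \<in> V \<and> H a b)\<^sup>*\<^sup>* x y}"

lemma is_component_component_of: "x \<in> V \<Longrightarrow> is_component V H (component_of V H x)"
  unfolding is_component_def component_of_def by blast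

lemma self_in_component_of: "x \<in> V \<Longrightarrow> x \<in> component_of V H x"
  unfolding component_of_def by simp

lemma component_of_closed:
  "y \<in> component_of V H x \<Longrightarrow> z \<in> V \<Longrightarrow> H y z \<Longrightarrow> z \<in> component_of V H x"
  unfolding component_of_def by (auto intro: rtranclp.rtrancl_into_rtrancl)

lemma component_of_eq:
  assumes "symp H" and "y \<in> component_of V H x"
  shows "component_of V H y = component_of V H x"
proof -
  let ?H = "\<lambda>a b. a \<in> V \<and> b \<in> V \<and> H a b"
  have "symp ?H\<^sup>*\<^sup>*"
    using assms(1) by (intro symp_rtranclp) (auto simp: symp_def)
  moreover have "?H\<^sup>*\<^sup>* x y"
    using assms(2) unfolding component_of_def by blast
  ultimately show ?thesis
    unfolding component_of_def by (blast intro: rtranclp_trans dest: sympD)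
qed

lemma component_of_eq_if_overlap:
  assumes "symp H" and "z \<in> component_of V H x" and "z \<in> component_of V H y"
  shows "component_of V H x = component_of V H y"
  using component_of_eq[OF assms(1)] assms(2,3) by metis

lemma card_le_card_inter_add_card_diff:
  assumes "finite C" and "A \<subseteq> C"
  shows "card A \<le> card (A \<inter> B) + card (C - B)"
proof -
  have "card A \<le> card ((A \<inter> B) \<union> (C - B))"
    using assms by (intro card_mono) (auto intro: finite_subset)
  also have "\<dots> \<le> card (A \<inter> B) + card (C - B)"
    by (rule card_Un_le)
  finally show ?thesis .
qed

(* Matchings of a bipartite relation as sets of pairs, which makes augmentations easy to state. *)
definition pair_matching ::
    "('a \<Rightarrow> 'b \<Rightarrow> bool) \<Rightarrow> 'a set \<Rightarrow> 'b set \<Rightarrow> ('a \<times> 'b) set \<Rightarrow> bool" where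
  "pair_matching R A B M \<longleftrightarrow>
     M \<subseteq> A \<times> B \<and> (\<forall>(a, b) \<in> M. R a b) \<and> inj_on fst M \<and> inj_on snd M"

lemma pair_matching_subset:
  "pair_matching R A B M \<Longrightarrow> M' \<subseteq> M \<Longrightarrow> pair_matching R A B M'"
  unfolding pair_matching_def by (blast intro: inj_on_subset)

lemma finite_pair_matching:
  "finite A \<Longrightarrow> finite B \<Longrightarrow> pair_matching R A B M \<Longrightarrow> finite M"
  unfolding pair_matching_def by (blast intro: finite_subset)

lemma pair_matching_insert:
  assumes "pair_matching R A B M" and "a \<in> A - fst ` M" and "b \<in> B - snd ` M" and "R a b"
  shows "pair_matching R A B (insert (a, b) M)"
  using assms unfolding pair_matching_def by auto

lemma pair_matching_augment:
  assumes M: "pair_matching R A B M" and "(x, y) \<in> M"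
    and "u \<in> A - fst ` M" and "w \<in> B - snd ` M" and "R u y" and "R x w"
  shows "pair_matching R A B (insert (u, y) (insert (x, w) (M - {(x, y)})))"
proof -
  have "x \<notin> fst ` (M - {(x, y)})" and "y \<notin> snd ` (M - {(x, y)})"
    using M \<open>(x, y) \<in> M\<close> unfolding pair_matching_def
    by (force dest: inj_onD[of fst M "(x, y)"], force dest: inj_onD[of snd M "(x, y)"])
  moreover have "u \<noteq> x" and "w \<noteq> y"
    using assms(2-4) by force+
  ultimately show ?thesis
    using assms unfolding pair_matching_def by (auto intro: inj_on_subset)
qed

lemma ex_maximum_pair_matching:
  assumes "finite A" and "finite B"
  obtains M where "pair_matching R A B M"
    and "\<And>M'. pair_matching R A B M' \<Longrightarrow> card M' \<le> card M"
proof -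
  have "pair_matching R A B {}"
    unfolding pair_matching_def by simp
  moreover have "card M < Suc (card (A \<times> B))" if "pair_matching R A B M" for M
    using that assms card_mono[of "A \<times> B" M] unfolding pair_matching_def by simp
  ultimately show ?thesis
    using ex_has_greatest_nat[where f = card] that by blast
qed

context
  fixes R :: "'a \<Rightarrow> 'b \<Rightarrow> bool" and A :: "'a set" and B :: "'b set" and M :: "('a \<times> 'b) set"
  assumes finite_AB: "finite A" "finite B"
    and matching: "pair_matching R A B M"
    and maximum: "\<And>M'. pair_matching R A B M' \<Longrightarrow> card M' \<le> card M"
begin

lemma maximum_pair_matching_no_free_edge:
  assumes "u \<in> A - fst ` M" and "w \<in> B - snd ` M"
  shows "\<not> R u w"
proof
  assume "R u w"
  then have "card (insert (u, w) M) \<le> card M"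
    using maximum pair_matching_insert[OF matching assms] by blast
  moreover have "(u, w) \<notin> M"
    using assms by force
  ultimately show False
    using finite_pair_matching[OF finite_AB matching] by simp
qed

lemma maximum_pair_matching_no_augmenting_path:
  assumes "(x, y) \<in> M" and "u \<in> A - fst ` M" and "w \<in> B - snd ` M" and "R u y"
  shows "\<not> R x w"
proof
  assume "R x w"
  let ?M' = "insert (u, y) (insert (x, w) (M - {(x, y)}))"
  have "card ?M' \<le> card M"
    using maximum pair_matching_augment[OF matching assms(1-4) \<open>R x w\<close>] by blast
  moreover have "(x, w) \<notin> M" and "u \<noteq> x" and "(u, y) \<notin> M"
    using assms by force+
  moreover have "finite M" and "card (M - {(x, y)}) = card M - 1" and "card M \<noteq> 0"
    using finite_pair_matching[OF finite_AB matching] assms(1) by auto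
  ultimately show False
    by (simp add: card_insert_if)
qed

end

lemma maximum_pair_matching_decomposition:
  assumes "finite A" and "finite B"
  obtains M U X W Y where "pair_matching R A B M"
    and "U \<union> X \<subseteq> A" and "U \<inter> X = {}" and "W \<union> Y \<subseteq> B" and "W \<inter> Y = {}"
    and "card A = card U + card M" and "card B = card W + card M"
    and "card M = card X + card Y"
    and "\<forall>u \<in> U. \<forall>y \<in> W \<union> Y. \<not> R u y" and "\<forall>x \<in> X. \<forall>w \<in> W. \<not> R x w"
proof -
  obtain M where M: "pair_matching R A B M"
    and max: "\<And>M'. pair_matching R A B M' \<Longrightarrow> card M' \<le> card M"
    using ex_maximum_pair_matching[OF assms, where R = R] by blast
  have fin: "finite M" and sub: "fst ` M \<subseteq> A" "snd ` M \<subseteq> B"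
    and inj: "inj_on fst M" "inj_on snd M"
    using finite_pair_matching[OF assms M] M unfolding pair_matching_def by auto
  define U where "U = A - fst ` M"
  define W where "W = B - snd ` M"
  define M1 where "M1 = {p \<in> M. \<exists>u \<in> U. R u (snd p)}"
  define X where "X = fst ` M1"
  define Y where "Y = snd ` (M - M1)"
  have M1: "M1 \<subseteq> M"
    unfolding M1_def by blast
  have "card A = card U + card M" "card B = card W + card M"
    using card_Diff_subset[OF finite_imageI[OF fin] sub(1)] card_mono[OF assms(1) sub(1)]
      card_Diff_subset[OF finite_imageI[OF fin] sub(2)] card_mono[OF assms(2) sub(2)]
      card_image[OF inj(1)] card_image[OF inj(2)]
    unfolding U_def W_def by simp_all
  moreover have "card M = card X + card Y"
    using card_image[OF inj_on_subset[OF inj(1) M1]] card_image[OF inj_on_subset[OF inj(2)]]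
      card_Diff_subset[OF finite_subset[OF M1 fin] M1] card_mono[OF fin M1]
    unfolding X_def Y_def by simp
  moreover have "\<forall>u \<in> U. \<forall>y \<in> W \<union> Y. \<not> R u y"
    using maximum_pair_matching_no_free_edge[OF assms M max]
    unfolding U_def W_def Y_def M1_def by blast
  moreover have "\<forall>x \<in> X. \<forall>w \<in> W. \<not> R x w"
    using maximum_pair_matching_no_augmenting_path[OF assms M max]
    unfolding U_def W_def X_def M1_def by fastforce
  moreover have "U \<union> X \<subseteq> A" "U \<inter> X = {}" "W \<union> Y \<subseteq> B" "W \<inter> Y = {}"
    using sub M1 unfolding U_def W_def X_def Y_def by force+
  ultimately show ?thesis
    using that M by blast
qed

lemma connected_k_matching_of_pair_matching:
  assumes M: "pair_matching R (C \<inter> A) (C \<inter> B) M" and "A \<inter> B = {}" and "finite M"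
    and "is_component V R C"
  shows "connected_k_matching V R (card M) ((\<lambda>(a, b). {a, b}) ` M)"
proof -
  have distinct: "a \<noteq> b'" if "(a, b) \<in> M" "(a', b') \<in> M" for a b a' b'
    using that M \<open>A \<inter> B = {}\<close> unfolding pair_matching_def by blast
  have inj: "a = a' \<longleftrightarrow> (a, b) = (a', b')" "b = b' \<longleftrightarrow> (a, b) = (a', b')"
    if "(a, b) \<in> M" "(a', b') \<in> M" for a b a' b'
    using that M unfolding pair_matching_def
    by (auto dest: inj_onD[of fst M "(a, b)" "(a', b')"] inj_onD[of snd M "(a, b)" "(a', b')"])
  have "is_matching R ((\<lambda>(a, b). {a, b}) ` M)"
    using M unfolding is_matching_def pair_matching_def
    by (auto dest: distinct inj) (blast dest: distinct)
  moreover have "inj_on (\<lambda>(a, b). {a, b}) M"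
    by (auto intro!: inj_onI simp: doubleton_eq_iff dest: distinct)
  moreover have "\<forall>e \<in> (\<lambda>(a, b). {a, b}) ` M. e \<subseteq> C"
    using M unfolding pair_matching_def by auto
  ultimately show ?thesis
    unfolding connected_k_matching_def using assms(3,4) by (auto simp: card_image)
qed

definition has_large_component ::
    "'a set \<Rightarrow> ('a \<Rightarrow> 'a \<Rightarrow> bool) \<Rightarrow> 'a set \<Rightarrow> 'a set \<Rightarrow> nat \<Rightarrow> bool" where
  "has_large_component V H V1 V2 n \<longleftrightarrow>
     (\<exists>x \<in> V. n \<le> card (component_of V H x \<inter> V1) \<and> n \<le> card (component_of V H x \<inter> V2))"

lemma has_large_componentI:
  "x \<in> V \<Longrightarrow> n \<le> card (component_of V H x \<inter> V1) \<Longrightarrow> n \<le> card (component_of V H x \<inter> V2)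
    \<Longrightarrow> has_large_component V H V1 V2 n"
  unfolding has_large_component_def by blast

lemma has_large_component_swap:
  "has_large_component V H V2 V1 n = has_large_component V H V1 V2 n"
  unfolding has_large_component_def by blast

locale dense_coloured_bipartite =
  fixes V V1 V2 :: "'a set" and E R :: "'a \<Rightarrow> 'a \<Rightarrow> bool" and m n :: nat
  assumes V_eq: "V = V1 \<union> V2"
    and finite_V1: "finite V1" and finite_V2: "finite V2" and disjoint: "V1 \<inter> V2 = {}"
    and card_V1: "card V1 = m + n - 1" and card_V2: "card V2 = m + n - 1"
    and n_pos: "0 < n" and n_less_m: "n < m"
    and E_sym: "symp E"
    and E_bipartite: "\<And>u v. E u v \<Longrightarrow> (u \<in> V1 \<and> v \<in> V2) \<or> (u \<in> V2 \<and> v \<in> V1)"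
    and min_degree: "\<And>u. u \<in> V \<Longrightarrow> 3 * (m + n - 1) < 4 * card {v \<in> V. E u v}"
    and R_sym: "symp R"
begin

abbreviation "N \<equiv> m + n - 1"
abbreviation "nb v \<equiv> {w \<in> V. E v w}"
abbreviation "red_comp x \<equiv> component_of V R x"
abbreviation "blue_comp x \<equiv> component_of V (blue_edges E R) x"
abbreviation "large_blue_component \<equiv> has_large_component V (blue_edges E R) V1 V2 n"

lemma dense_coloured_bipartite_swap: "dense_coloured_bipartite V V2 V1 E R m n"
  by unfold_locales
    (use V_eq finite_V1 finite_V2 disjoint card_V1 card_V2 n_pos n_less_m E_sym E_bipartite
      min_degree R_sym in auto)

lemma two_n_le_N: "2 * n \<le> N"
  using n_less_m by simp

lemma E_in_V: "E u v \<Longrightarrow> u \<in> V \<and> v \<in> V"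
  using E_bipartite V_eq by blast

lemma E_commute: "E u v \<longleftrightarrow> E v u"
  using E_sym by (blast dest: sympD)

lemma R_commute: "R u v \<longleftrightarrow> R v u"
  using R_sym by (blast dest: sympD)

lemma blue_sym: "symp (blue_edges E R)"
  using E_sym R_sym unfolding blue_edges_def symp_def by blast

lemma neighbours_subset: "v \<in> V1 \<Longrightarrow> nb v \<subseteq> V2"
  using E_bipartite disjoint by blast

lemma card_V1_diff_add: "card (V1 - S) + card (S \<inter> V1) = N"
proof -
  have "card ((V1 - S) \<union> (S \<inter> V1)) = card (V1 - S) + card (S \<inter> V1)"
    by (rule card_Un_disjoint) (use finite_V1 in auto)
  moreover have "(V1 - S) \<union> (S \<inter> V1) = V1"
    by blast
  ultimately show ?thesis
    using card_V1 by simp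
qed

lemma card_Un_V1_diff:
  assumes "S \<subseteq> T \<inter> V1"
  shows "card (S \<union> (V1 - T)) = card S + card (V1 - T)"
  using assms finite_V1 by (intro card_Un_disjoint) (auto intro: finite_subset)

lemma card_non_neighbours:
  assumes "v \<in> V1"
  shows "4 * card (V2 - nb v) < N"
proof -
  have "card (V2 - nb v) = N - card (nb v)"
    using card_Diff_subset[OF finite_subset[OF neighbours_subset[OF assms] finite_V2]
        neighbours_subset[OF assms]] card_V2 by simp
  moreover have "card (nb v) \<le> N"
    using card_mono[OF finite_V2 neighbours_subset[OF assms]] card_V2 by simp
  ultimately show ?thesis
    using min_degree[of v] assms V_eq by simp
qed

lemma card_inter_neighbours:
  assumes "v \<in> V1" and "A \<subseteq> V2"
  shows "4 * card A < 4 * card (A \<inter> nb v) + N"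
  using card_le_card_inter_add_card_diff[OF finite_V2 assms(2), of "nb v"]
    card_non_neighbours[OF assms(1)] by linarith

lemma card_inter_common_neighbours:
  assumes "v \<in> V1" and "v' \<in> V1" and "A \<subseteq> V2"
  shows "2 * card A < 2 * card (A \<inter> nb v \<inter> nb v') + N"
proof -
  have "card A \<le> card (A \<inter> nb v) + card (V2 - nb v)"
    using card_le_card_inter_add_card_diff[OF finite_V2 assms(3)] .
  moreover have "card (A \<inter> nb v) \<le> card (A \<inter> nb v \<inter> nb v') + card (V2 - nb v')"
    using card_le_card_inter_add_card_diff[OF finite_V2] assms(3) by blast
  ultimately show ?thesis
    using card_non_neighbours[OF assms(1)] card_non_neighbours[OF assms(2)] by linarith
qed

lemma no_red_edge_leaving:
  "y \<in> red_comp k \<Longrightarrow> x \<in> V \<Longrightarrow> x \<notin> red_comp k \<Longrightarrow> \<not> R y x"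
  using component_of_closed[of y V R k x] by blast

lemma blue_edge_in_blue_comp:
  "a \<in> blue_comp x \<Longrightarrow> E a b \<Longrightarrow> \<not> R a b \<Longrightarrow> b \<in> blue_comp x"
  using component_of_closed[of a V "blue_edges E R" x b] E_in_V[of a b]
  unfolding blue_edges_def by blast

lemma card_red_free_in_blue_comp:
  assumes v: "v \<in> V1" and A: "A \<subseteq> V2" and red_free: "\<forall>a \<in> A. \<not> R a v"
  shows "4 * card A < 4 * card (blue_comp v \<inter> A) + N"
proof -
  have "v \<in> blue_comp v"
    using self_in_component_of[of v V] v V_eq by blast
  then have "A \<inter> nb v \<subseteq> blue_comp v \<inter> A"
    using blue_edge_in_blue_comp[of v v] red_free R_commute[of _ v] by blast
  then have "card (A \<inter> nb v) \<le> card (blue_comp v \<inter> A)"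
    using A finite_V2 by (intro card_mono) (auto intro: finite_subset)
  then show ?thesis
    using card_inter_neighbours[OF v A] by linarith
qed

lemma red_free_side_in_blue_comp:
  assumes A: "A \<subseteq> V2" and B: "B \<subseteq> V1" and red_free: "\<forall>a \<in> A. \<forall>b \<in> B. \<not> R a b"
    and card_A: "N \<le> 2 * card A" and b0: "b0 \<in> B"
  shows "B \<subseteq> blue_comp b0"
proof
  fix b assume b: "b \<in> B"
  have "2 * card A < 2 * card (A \<inter> nb b0 \<inter> nb b) + N"
    using card_inter_common_neighbours[of b0 b A] b0 b A B by blast
  then have "A \<inter> nb b0 \<inter> nb b \<noteq> {}"
    using card_A by auto
  then obtain a where a: "a \<in> A" "E b0 a" "E a b"
    using E_commute[of b] by blast
  have "b0 \<in> blue_comp b0"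
    using self_in_component_of[of b0 V] b0 B V_eq by blast
  then have "a \<in> blue_comp b0"
    using blue_edge_in_blue_comp[of b0 b0 a] a red_free b0 R_commute[of b0 a] by blast
  then show "b \<in> blue_comp b0"
    using blue_edge_in_blue_comp[of a b0 b] a red_free b by blast
qed

lemma blue_comp_large_in_V2:
  assumes v: "v \<in> V1 \<inter> blue_comp x" and v': "v' \<in> V1 \<inter> blue_comp x"
    and not_red: "v' \<notin> red_comp v"
  shows "N < 2 * card (blue_comp x \<inter> V2)"
proof -
  have V: "v \<in> V" "v' \<in> V"
    using v v' V_eq by auto
  have "V2 \<inter> nb v \<inter> nb v' \<subseteq> blue_comp x \<inter> V2"
  proof
    fix z assume z: "z \<in> V2 \<inter> nb v \<inter> nb v'"
    have "\<not> R v z \<or> \<not> R v' z"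
    proof (rule ccontr)
      assume "\<not> (\<not> R v z \<or> \<not> R v' z)"
      then have "z \<in> red_comp v" and "z \<in> red_comp v'"
        using component_of_closed[OF self_in_component_of] V z by auto
      then have "red_comp v' = red_comp v"
        using component_of_eq[OF R_sym] by (metis (no_types))
      then show False
        using not_red self_in_component_of[OF V(2), of R] by simp
    qed
    then show "z \<in> blue_comp x \<inter> V2"
      using blue_edge_in_blue_comp[of v x z] blue_edge_in_blue_comp[of v' x z] v v' z by auto
  qed
  then have "card (V2 \<inter> nb v \<inter> nb v') \<le> card (blue_comp x \<inter> V2)"
    by (intro card_mono) (simp_all add: finite_V2)
  then show ?thesis
    using card_inter_common_neighbours[of v v' V2] v v' card_V2 by auto
qed

end

(* The setting is symmetric in V1 and V2; facts with prefix sw are the mirrored versions. *)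
sublocale dense_coloured_bipartite \<subseteq> sw: dense_coloured_bipartite V V2 V1 E R m n
  by (rule dense_coloured_bipartite_swap)

context dense_coloured_bipartite
begin

lemma large_blue_component_if_red_free:
  assumes A: "A \<subseteq> V1" and B: "B \<subseteq> V2" and red_free: "\<forall>a \<in> A. \<forall>b \<in> B. \<not> R a b"
    and card_A: "N \<le> 2 * card A" and card_B: "n \<le> card B"
  shows large_blue_component
proof -
  obtain b0 where b0: "b0 \<in> B"
    using card_B n_pos by fastforce
  define D where "D = blue_comp b0"
  have "B \<subseteq> D"
    using sw.red_free_side_in_blue_comp[OF A B red_free card_A b0] unfolding D_def .
  then have card_D2: "n \<le> card (D \<inter> V2)"
    using card_B card_mono[of "D \<inter> V2" B] B finite_V2 by fastforce
  have "n \<le> card (D \<inter> A)"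
  proof (cases "N < 4 * card B")
    case True
    have "A \<subseteq> D"
    proof
      fix a assume a: "a \<in> A"
      have "4 * card B < 4 * card (blue_comp a \<inter> B) + N"
        using card_red_free_in_blue_comp[of a B] a A B red_free R_commute by blast
      then have "blue_comp a \<inter> B \<noteq> {}"
        using True by auto
      then obtain b where "b \<in> blue_comp a" "b \<in> D"
        using \<open>B \<subseteq> D\<close> by blast
      then show "a \<in> D"
        using component_of_eq_if_overlap[OF blue_sym] self_in_component_of[of a V] a A V_eq
        unfolding D_def by blast
    qed
    then show ?thesis
      using card_A two_n_le_N by (simp add: Int_absorb1)
  next
    case False
    then show ?thesis
      using sw.card_red_free_in_blue_comp[of b0 A] A B b0 red_free card_A card_B
      unfolding D_def by fastforce
  qed
  then have "n \<le> card (D \<inter> V1)"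
    using card_mono[of "D \<inter> V1" "D \<inter> A"] A finite_V1 by fastforce
  moreover have "b0 \<in> V"
    using b0 B V_eq by blast
  ultimately show ?thesis
    using card_D2 unfolding D_def by (blast intro: has_large_componentI)
qed

lemma card_blue_comp_inter_red_comp:
  assumes y: "y \<in> V2 - red_comp k" and "y \<notin> blue_comp x"
  shows "4 * card (blue_comp x \<inter> red_comp k \<inter> V1) < N"
proof -
  have "blue_comp x \<inter> red_comp k \<inter> V1 \<subseteq> V1 - nb y"
  proof
    fix z assume z: "z \<in> blue_comp x \<inter> red_comp k \<inter> V1"
    have "\<not> R z y"
      using no_red_edge_leaving[of z k y] z y V_eq by blast
    then have "\<not> E z y"
      using blue_edge_in_blue_comp[of z x y] z assms(2) by blast
    then show "z \<in> V1 - nb y"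
      using z E_commute[of z y] by blast
  qed
  then have "card (blue_comp x \<inter> red_comp k \<inter> V1) \<le> card (V1 - nb y)"
    using finite_V1 by (intro card_mono) auto
  then show ?thesis
    using sw.card_non_neighbours[of y] y by auto
qed

lemma blue_comp_large_in_V2_if_leaves_red_comp:
  assumes x1: "x1 \<in> V1 \<inter> blue_comp x \<inter> red_comp k"
    and y: "y \<in> V2 - red_comp k" "y \<notin> blue_comp x"
    and large: "N \<le> 4 * card (blue_comp x \<inter> V1)"
  shows "N < 2 * card (blue_comp x \<inter> V2)"
proof -
  obtain x2 where x2: "x2 \<in> V1 \<inter> blue_comp x" "x2 \<notin> red_comp k"
  proof (rule ccontr)
    assume "\<not> thesis"
    then have "blue_comp x \<inter> V1 \<subseteq> blue_comp x \<inter> red_comp k \<inter> V1"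
      using that by blast
    then have "card (blue_comp x \<inter> V1) \<le> card (blue_comp x \<inter> red_comp k \<inter> V1)"
      using finite_V1 by (intro card_mono) auto
    then show False
      using card_blue_comp_inter_red_comp[OF y] large by linarith
  qed
  have "red_comp x1 = red_comp k"
    using component_of_eq[OF R_sym] x1 by blast
  then show ?thesis
    using blue_comp_large_in_V2[of x1 x x2] x1 x2 by blast
qed

lemma red_free_Un_outside_red_comp:
  assumes "W \<subseteq> red_comp k" and "\<forall>a \<in> A. \<forall>w \<in> W. \<not> R a w"
  shows "\<forall>a \<in> A \<union> (V - red_comp k). \<forall>w \<in> W. \<not> R a w"
  using assms no_red_edge_leaving[of _ k] R_commute by blast

lemma large_blue_component_if_red_free_in_red_comp:
  assumes k: "k \<in> V"
    and A: "A \<subseteq> red_comp k \<inter> V1" and W: "W \<subseteq> red_comp k \<inter> V2" "W \<noteq> {}"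
    and red_free: "\<forall>a \<in> A. \<forall>w \<in> W. \<not> R a w"
    and card_Q: "N + n \<le> 2 * card (A \<union> (V1 - red_comp k))"
    and card_W: "n \<le> card (W \<union> (V2 - red_comp k))"
    and card_outside: "card (V1 - red_comp k) < n"
  shows large_blue_component
proof -
  define K where "K = red_comp k"
  define Q where "Q = A \<union> (V1 - K)"
  obtain w0 where w0: "w0 \<in> W"
    using W(2) by blast
  define D where "D = blue_comp w0"
  have w0V: "w0 \<in> V2" "w0 \<in> V"
    using w0 W V_eq by auto
  have Q: "Q \<subseteq> V1" and "N \<le> 2 * card Q"
    using A card_Q unfolding Q_def K_def by auto
  moreover have red_free_Q: "\<forall>q \<in> Q. \<forall>w \<in> W. \<not> R q w"
    using red_free_Un_outside_red_comp[of W k A] W(1) red_free V_eq unfolding Q_def K_def by blast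
  ultimately have W_D: "W \<subseteq> D"
    using sw.red_free_side_in_blue_comp[OF Q _ red_free_Q _ w0] W(1) unfolding D_def by blast
  have "4 * card Q < 4 * card (D \<inter> Q) + N"
    using sw.card_red_free_in_blue_comp[OF w0V(1) Q] red_free_Q w0 unfolding D_def by blast
  moreover have "card (D \<inter> Q) \<le> card (D \<inter> V1)"
    using Q finite_V1 by (intro card_mono) auto
  ultimately have card_D1: "N + 2 * n < 4 * card (D \<inter> V1)"
    using card_Q unfolding Q_def K_def by linarith
  have "n \<le> card (D \<inter> V2)"
  proof (cases "V2 - K \<subseteq> D")
    case True
    then have "card (W \<union> (V2 - K)) \<le> card (D \<inter> V2)"
      using W_D W(1) finite_V2 by (intro card_mono) auto
    then show ?thesis
      using card_W unfolding K_def by linarith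
  next
    case False
    then obtain y where y: "y \<in> V2 - K" "y \<notin> D"
      by blast
    have "4 * card A < 4 * card (D \<inter> A) + N"
      using sw.card_red_free_in_blue_comp[OF w0V(1), of A] A red_free w0 unfolding D_def by blast
    then have "D \<inter> A \<noteq> {}"
      using card_Q card_outside card_Un_V1_diff[OF A] two_n_le_N by auto
    then obtain x1 where "x1 \<in> V1 \<inter> D \<inter> K"
      using A unfolding K_def by blast
    then have "N < 2 * card (D \<inter> V2)"
      using blue_comp_large_in_V2_if_leaves_red_comp y card_D1 unfolding D_def K_def by simp
    then show ?thesis
      using two_n_le_N by linarith
  qed
  with card_D1 two_n_le_N show ?thesis
    unfolding D_def by (intro has_large_componentI[OF w0V(2)]) auto
qed

lemma large_blue_component_if_blue_comp_splits_red_comp: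
  assumes small: "\<forall>k \<in> V. card (red_comp k \<inter> V1) < n"
    and w: "w \<in> V2" and w': "w' \<in> V2 \<inter> blue_comp w" "w' \<notin> red_comp w"
  shows large_blue_component
proof -
  have wV: "w \<in> V"
    using w V_eq by blast
  then have "w \<in> V2 \<inter> blue_comp w"
    using w self_in_component_of[OF wV] by blast
  then have large_V1: "N < 2 * card (blue_comp w \<inter> V1)"
    using sw.blue_comp_large_in_V2[of w w w'] w' by blast
  then have "blue_comp w \<inter> V1 \<noteq> {}"
    by auto
  then obtain v0 where v0: "v0 \<in> V1 \<inter> blue_comp w"
    by blast
  have "\<not> blue_comp w \<inter> V1 \<subseteq> red_comp v0"
  proof
    assume "blue_comp w \<inter> V1 \<subseteq> red_comp v0"
    then have "card (blue_comp w \<inter> V1) \<le> card (red_comp v0 \<inter> V1)"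
      using finite_V1 by (intro card_mono) auto
    moreover have "card (red_comp v0 \<inter> V1) < n"
      using small v0 V_eq by auto
    ultimately show False
      using large_V1 two_n_le_N by linarith
  qed
  then obtain v where "v \<in> V1 \<inter> blue_comp w" "v \<notin> red_comp v0"
    by blast
  then have "N < 2 * card (blue_comp w \<inter> V2)"
    using blue_comp_large_in_V2[of v0 w v] v0 by blast
  then show ?thesis
    using large_V1 two_n_le_N by (intro has_large_componentI[OF wV]) auto
qed

lemma red_cover_of_neighbourhood:
  assumes small: "\<forall>k \<in> V. card (red_comp k \<inter> V2) < n"
    and blue_red: "\<forall>w \<in> V2. \<forall>w' \<in> V2 \<inter> blue_comp w. w' \<in> red_comp w"
    and u: "u \<in> V1"
  obtains w where "w \<in> V2" and "w \<notin> red_comp u" and "nb u \<subseteq> red_comp u \<union> red_comp w"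
proof -
  have uV: "u \<in> V"
    using u V_eq by blast
  have "\<not> nb u \<subseteq> red_comp u"
  proof
    assume "nb u \<subseteq> red_comp u"
    then have "card (nb u) \<le> card (red_comp u \<inter> V2)"
      using neighbours_subset[OF u] finite_V2 by (intro card_mono) auto
    then show False
      using small uV min_degree[OF uV] two_n_le_N by fastforce
  qed
  then obtain w where w: "w \<in> nb u" "w \<notin> red_comp u"
    by blast
  have "\<not> R u w"
    using w component_of_closed[OF self_in_component_of[OF uV]] by blast
  then have "w \<in> blue_comp u"
    using w blue_edge_in_blue_comp[OF self_in_component_of[OF uV]] by blast
  then have blue_comp_w: "blue_comp w = blue_comp u"
    using component_of_eq[OF blue_sym] by blast
  have "nb u \<subseteq> red_comp u \<union> red_comp w"
  proof
    fix z assume z: "z \<in> nb u"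
    show "z \<in> red_comp u \<union> red_comp w"
    proof (cases "R u z")
      case True
      then show ?thesis
        using z component_of_closed[OF self_in_component_of[OF uV]] by blast
    next
      case False
      then have "z \<in> V2 \<inter> blue_comp w"
        using z blue_comp_w blue_edge_in_blue_comp[OF self_in_component_of[OF uV]]
          neighbours_subset[OF u] by blast
      then show ?thesis
        using blue_red w neighbours_subset[OF u] by blast
    qed
  qed
  then show ?thesis
    using that w neighbours_subset[OF u] by blast
qed

lemma ex_V1_outside_two_small_sets:
  assumes "card (S \<inter> V1) < n" and "card (T \<inter> V1) < n"
  obtains v where "v \<in> V1" and "v \<notin> S" and "v \<notin> T"
proof -
  have "card (S \<inter> V1 \<union> T \<inter> V1) < card V1"
    using card_Un_le[of "S \<inter> V1" "T \<inter> V1"] assms card_V1 two_n_le_N by linarith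
  then have "S \<inter> V1 \<union> T \<inter> V1 \<noteq> V1"
    by auto
  then show ?thesis
    using that by blast
qed

lemma blue_comp_splits_red_comps:
  assumes small: "\<forall>k \<in> V. card (red_comp k \<inter> V1) < n \<and> card (red_comp k \<inter> V2) < n"
  obtains w w' where "w \<in> V2" and "w' \<in> V2 \<inter> blue_comp w" and "w' \<notin> red_comp w"
proof (rule ccontr)
  assume "\<not> thesis"
  then have blue_red: "\<forall>w \<in> V2. \<forall>w' \<in> V2 \<inter> blue_comp w. w' \<in> red_comp w"
    using that by blast
  have "V1 \<noteq> {}"
    using card_V1 two_n_le_N n_pos by auto
  then obtain u where u: "u \<in> V1"
    by blast
  obtain w where w: "w \<in> V2" "w \<notin> red_comp u" and cover_u: "nb u \<subseteq> red_comp u \<union> red_comp w"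
    using red_cover_of_neighbourhood[OF _ blue_red u] small by blast
  obtain v where v: "v \<in> V1" "v \<notin> red_comp u" "v \<notin> red_comp w"
    using ex_V1_outside_two_small_sets[of "red_comp u" "red_comp w"] small u w V_eq by blast
  obtain w' where w': "w' \<in> V2" and cover_v: "nb v \<subseteq> red_comp v \<union> red_comp w'"
    using red_cover_of_neighbourhood[OF _ blue_red v(1)] small by blast
  have "V2 \<inter> nb u \<inter> nb v \<subseteq> red_comp w' \<inter> V2"
  proof
    fix z assume z: "z \<in> V2 \<inter> nb u \<inter> nb v"
    have "z \<notin> red_comp v"
    proof
      assume "z \<in> red_comp v"
      moreover have "z \<in> red_comp u \<or> z \<in> red_comp w"
        using cover_u z by blast
      ultimately have "red_comp v = red_comp u \<or> red_comp v = red_comp w"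
        using component_of_eq_if_overlap[OF R_sym] by blast
      then show False
        using v self_in_component_of[of v V R] V_eq by auto
    qed
    then show "z \<in> red_comp w' \<inter> V2"
      using cover_v z by blast
  qed
  then have "card (V2 \<inter> nb u \<inter> nb v) \<le> card (red_comp w' \<inter> V2)"
    using finite_V2 by (intro card_mono) auto
  moreover have "card (red_comp w' \<inter> V2) < n"
    using small w' V_eq by auto
  ultimately show False
    using card_inter_common_neighbours[OF u v(1), of V2] card_V2 two_n_le_N by simp
qed

end

locale no_red_connected_matching = dense_coloured_bipartite +
  assumes no_red_matching: "\<nexists>M. connected_k_matching V R m M"
begin

lemma no_red_connected_matching_swap: "no_red_connected_matching V V2 V1 E R m n"
  using sw.dense_coloured_bipartite_axioms no_red_matching
  unfolding no_red_connected_matching_def no_red_connected_matching_axioms_def by blast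

lemma card_red_pair_matching_less:
  assumes k: "k \<in> V" and M: "pair_matching R (red_comp k \<inter> V1) (red_comp k \<inter> V2) M"
  shows "card M < m"
proof (rule ccontr)
  assume "\<not> card M < m"
  then obtain M' where M': "M' \<subseteq> M" "card M' = m"
    by (meson not_less obtain_subset_with_card_n)
  have "finite M"
    using finite_pair_matching[OF _ _ M] finite_V1 finite_V2 by blast
  then have "connected_k_matching V R (card M') ((\<lambda>(a, b). {a, b}) ` M')"
    using connected_k_matching_of_pair_matching[OF pair_matching_subset[OF M M'(1)] disjoint]
      is_component_component_of[OF k] M'(1) finite_subset by blast
  then show False
    using no_red_matching M'(2) by blast
qed

lemma large_blue_component_if_red_comp_large:
  assumes k: "k \<in> V" and K1: "m \<le> card (red_comp k \<inter> V1)" and K2: "m \<le> card (red_comp k \<inter> V2)"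
  shows large_blue_component
proof -
  define K where "K = red_comp k"
  obtain M U X W Y where M: "pair_matching R (K \<inter> V1) (K \<inter> V2) M"
    and sub: "U \<union> X \<subseteq> K \<inter> V1" "U \<inter> X = {}" "W \<union> Y \<subseteq> K \<inter> V2" "W \<inter> Y = {}"
    and card: "card (K \<inter> V1) = card U + card M" "card (K \<inter> V2) = card W + card M"
      "card M = card X + card Y"
    and red_free: "\<forall>u \<in> U. \<forall>y \<in> W \<union> Y. \<not> R u y" "\<forall>x \<in> X. \<forall>w \<in> W. \<not> R x w"
    using maximum_pair_matching_decomposition[of "K \<inter> V1" "K \<inter> V2" R] finite_V1 finite_V2
    by blast
  have N_eq: "N + 1 = m + n"
    using n_pos by simp
  have s: "card M < m"
    using card_red_pair_matching_less[OF k] M unfolding K_def by blast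
  have UX: "card (U \<union> X) = card U + card X"
    using sub(1,2) finite_V1 by (intro card_Un_disjoint) (auto intro: finite_subset)
  have WY: "card (W \<union> Y) = card W + card Y"
    using sub(3,4) finite_V2 by (intro card_Un_disjoint) (auto intro: finite_subset)
  have nonempty: "U \<noteq> {}" "W \<noteq> {}"
    using card(1,2) s K1 K2 unfolding K_def by auto
  have outside: "card (V1 - K) < n" "card (V2 - K) < n"
    using card_V1_diff_add[of K] sw.card_V1_diff_add[of K] K1 K2 N_eq unfolding K_def by linarith+
  have unmatched: "n \<le> card (U \<union> (V1 - K))" "n \<le> card (W \<union> (V2 - K))"
    using card_Un_V1_diff[of U K] sw.card_Un_V1_diff[of W K] sub(1,3) card(1,2) s N_eq
      card_V1_diff_add[of K] sw.card_V1_diff_add[of K] by auto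
  \<comment> \<open>Since card X + card Y = card M < m, one of the red-free pairs is large enough.\<close>
  have "N + n \<le> 2 * card (U \<union> X \<union> (V1 - K)) \<or> N + n \<le> 2 * card (W \<union> Y \<union> (V2 - K))"
    using card_Un_V1_diff[OF sub(1)] sw.card_Un_V1_diff[OF sub(3)] card UX WY s N_eq
      card_V1_diff_add[of K] sw.card_V1_diff_add[of K] by linarith
  moreover have "N + n \<le> 2 * card (U \<union> X \<union> (V1 - K)) \<Longrightarrow> large_blue_component"
    using large_blue_component_if_red_free_in_red_comp[OF k, of "U \<union> X" W]
      sub(1,3) nonempty(2) red_free unmatched(2) outside(1) unfolding K_def by blast
  moreover have "N + n \<le> 2 * card (W \<union> Y \<union> (V2 - K)) \<Longrightarrow> large_blue_component"
    using sw.large_blue_component_if_red_free_in_red_comp[OF k, of "W \<union> Y" U]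
      sub(1,3) nonempty(1) red_free R_commute unmatched(1) outside(2) has_large_component_swap
    unfolding K_def by blast
  ultimately show ?thesis
    by blast
qed

lemma large_blue_component_if_red_comp_meets_V1:
  assumes k: "k \<in> V" and K1: "n \<le> card (red_comp k \<inter> V1)"
  shows large_blue_component
proof -
  define K where "K = red_comp k"
  have N_eq: "N + 1 = m + n"
    using n_pos by simp
  have red_free: "\<not> R a b \<and> \<not> R b a" if "a \<in> K" and "b \<in> V - K" for a b
    using no_red_edge_leaving[of a k b] that R_commute[of a b] unfolding K_def by blast
  have outside: "card (V1 - K) + card (K \<inter> V1) = N" "card (V2 - K) + card (K \<inter> V2) = N"
    using card_V1_diff_add sw.card_V1_diff_add .
  consider "2 * card (K \<inter> V2) \<le> N"
    | "N < 2 * card (K \<inter> V2)" "card (K \<inter> V1) < m"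
    | "card (K \<inter> V2) < m" "m \<le> card (K \<inter> V1)"
    | "m \<le> card (K \<inter> V1)" "m \<le> card (K \<inter> V2)"
    by linarith
  then show ?thesis
  proof cases
    case 1
    then have "N \<le> 2 * card (V2 - K)"
      using outside(2) by linarith
    then have "has_large_component V (blue_edges E R) V2 V1 n"
      using sw.large_blue_component_if_red_free[of "V2 - K" "K \<inter> V1"] red_free K1 V_eq
      unfolding K_def by blast
    then show ?thesis
      by (simp only: has_large_component_swap)
  next
    case 2
    then have "N \<le> 2 * card (K \<inter> V2)" and "n \<le> card (V1 - K)"
      using outside(1) N_eq by linarith+
    then have "has_large_component V (blue_edges E R) V2 V1 n"
      using sw.large_blue_component_if_red_free[of "K \<inter> V2" "V1 - K"] red_free V_eq
      unfolding K_def by blast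
    then show ?thesis
      by (simp only: has_large_component_swap)
  next
    case 3
    then have "N \<le> 2 * card (K \<inter> V1)" and "n \<le> card (V2 - K)"
      using outside(2) N_eq n_less_m by linarith+
    then show ?thesis
      using large_blue_component_if_red_free[of "K \<inter> V1" "V2 - K"] red_free V_eq
      unfolding K_def by blast
  next
    case 4
    then show ?thesis
      using large_blue_component_if_red_comp_large[OF k] unfolding K_def by blast
  qed
qed

end

sublocale no_red_connected_matching \<subseteq> sw: no_red_connected_matching V V2 V1 E R m n
  by (rule no_red_connected_matching_swap)

context no_red_connected_matching
begin

theorem large_blue_component:
  shows large_blue_component
proof (cases "\<exists>k \<in> V. n \<le> card (red_comp k \<inter> V1) \<or> n \<le> card (red_comp k \<inter> V2)")
  case True
  then show ?thesis
    using large_blue_component_if_red_comp_meets_V1 sw.large_blue_component_if_red_comp_meets_V1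
      has_large_component_swap by blast
next
  case False
  then have small: "\<forall>k \<in> V. card (red_comp k \<inter> V1) < n \<and> card (red_comp k \<inter> V2) < n"
    by auto
  then obtain w w' where "w \<in> V2" "w' \<in> V2 \<inter> blue_comp w" "w' \<notin> red_comp w"
    by (rule blue_comp_splits_red_comps)
  then show ?thesis
    using large_blue_component_if_blue_comp_splits_red_comp small by blast
qed

end

lemma three_quarters_less_iff: "3 / 4 * real a < real b \<longleftrightarrow> 3 * a < 4 * b"
  by linarith

theorem lemma3p1:
  fixes V1 V2 :: "'a set" and E R :: "'a \<Rightarrow> 'a \<Rightarrow> bool" and m n :: nat
  assumes "0 < n" and "n < m"
    and "balanced_bipartite_graph V1 V2 E"
    and "card V1 = m + n - 1" and "card V2 = m + n - 1"
    and "\<forall>u\<in>V1 \<union> V2. real (degree (V1 \<union> V2) E u) > 3 / 4 * real (m + n - 1)"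
    and "red_blue_coloring E R"
    and "\<not> (\<exists>M. connected_k_matching (V1 \<union> V2) R m M)"
  shows "\<exists>C. is_component (V1 \<union> V2) (blue_edges E R) C \<and>
           card (C \<inter> V1) \<ge> n \<and> card (C \<inter> V2) \<ge> n"
proof -
  have min_degree: "3 * (m + n - 1) < 4 * card {v \<in> V1 \<union> V2. E u v}" if "u \<in> V1 \<union> V2" for u
    using assms(6) that three_quarters_less_iff unfolding degree_def by blast
  have graph: "finite V1" "finite V2" "V1 \<inter> V2 = {}" "symp E"
    "\<And>u v. E u v \<Longrightarrow> (u \<in> V1 \<and> v \<in> V2) \<or> (u \<in> V2 \<and> v \<in> V1)"
    using assms(3) unfolding balanced_bipartite_graph_def symp_def by blast+
  have "symp R"
    using assms(7) unfolding red_blue_coloring_def symp_def by blast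
  interpret no_red_connected_matching "V1 \<union> V2" V1 V2 E R m n
    by unfold_locales (assumption | rule refl graph \<open>symp R\<close> min_degree assms(1,2,4,5,8))+
  obtain x where x: "x \<in> V1 \<union> V2"
    and "n \<le> card (blue_comp x \<inter> V1)" "n \<le> card (blue_comp x \<inter> V2)"
    using large_blue_component unfolding has_large_component_def by blast
  then show ?thesis
    using is_component_component_of[OF x] by blast
qed

end
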